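(* Let $n\ge d\ge1$ and suppose $P\subseteq\mathbb{R}^d$ is a grid set of size $\binom{n}{d}$. Then for every compact convex set $C\subseteq\mathbb{R}^d$, \[ |\partial C\cap P|\le 2\binom{n}{d-1}. \]
   Context: A set $P\subseteq\mathbb{R}^d$ of size $\binom{n}{d}$ is a grid set if there exist $n$ hyperplanes in $\mathbb{R}^d$ such that $P$ is exactly the set of points obtained as intersections of $d$ of these hyperplanes (each $d$-subset of the hyperplanes meeting in a single point, these points being distinct). $\partial C$ denotes the boundary of $C$ in $\mathbb{R}^d$. *)

theory Defs
  imports "HOL-Analysis.Analysis"
begin

definition affine_hyperplane :: "'a::euclidean_space set \<Rightarrow> bool" where
  "affine_hyperplane h \<longleftrightarrow> (\<exists>a b. a \<noteq> 0 \<and> h = {x. a \<bullet> x = b})"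

definition grid_set :: "nat \<Rightarrow> 'a::euclidean_space set \<Rightarrow> bool" where
  "grid_set n P \<longleftrightarrow>
     (\<exists>H. finite H \<and> card H = n \<and> (\<forall>h\<in>H. affine_hyperplane h) \<and>
        (\<forall>S. S \<subseteq> H \<and> card S = DIM('a) \<longrightarrow> (\<exists>p. \<Inter>S = {p})) \<and>
        inj_on Inter {S. S \<subseteq> H \<and> card S = DIM('a)} \<and>
        P = \<Union>{\<Inter>S | S. S \<subseteq> H \<and> card S = DIM('a)}) \<and>
     card P = n choose DIM('a)"

end

(*
  Write P as the vertex set of an arrangement H of n hyperplanes, any d of which meet in a
  single point.  Each (d-1)-subset T of H cuts out a line \<Inter>T, a set on a line has at most
  two extreme points, and there are n choose (d-1) such lines.  So it suffices that every
  vertex p = \<Inter>S on the boundary of C is an extreme point of \<Inter>(S - {h}) \<inter> C for one of the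
  d hyperplanes h through p.  Otherwise every line \<Inter>(S - {h}) contains a segment of C with
  p in its relative interior, and a supporting hyperplane of C at p contains all these
  segments.  But their directions are linearly independent, since the direction of
  \<Inter>(S - {h}) is orthogonal to the normals of S - {h} and not to that of h; d independent
  vectors do not fit into a hyperplane.
*)
theory Submission
  imports Defs
begin

definition arrangement_vertices :: "'a::euclidean_space set set \<Rightarrow> 'a set" where
  "arrangement_vertices H = \<Union>{\<Inter>S | S. S \<subseteq> H \<and> card S = DIM('a)}"

lemma affine_hyperplane_equations:
  assumes "\<forall>h\<in>H. affine_hyperplane h"
  obtains A B where "\<And>h x. h \<in> H \<Longrightarrow> x \<in> h \<longleftrightarrow> A h \<bullet> x = B h"
proof -
  obtain A B where "\<And>h. h \<in> H \<Longrightarrow> h = {x. A h \<bullet> x = B h}"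
    using assms unfolding affine_hyperplane_def by metis
  then show ?thesis
    using that by blast
qed

lemma collinear_if_affine_Int_hyperplane_singleton:
  fixes L h :: "'a::euclidean_space set"
  assumes "affine L" "affine_hyperplane h" "L \<inter> h = {s}"
  shows "collinear L"
proof -
  obtain a b where h: "h = {x. a \<bullet> x = b}"
    using assms(2) unfolding affine_hyperplane_def by blast
  have "aff_dim (L \<inter> h) = 0"
    using assms(3) by simp
  then have "aff_dim L \<le> 1"
    using aff_dim_affine_Int_hyperplane[OF assms(1), of a b] assms(3) h
    by (auto split: if_splits)
  then show ?thesis
    by (simp add: collinear_aff_dim)
qed

lemma card_extreme_points_collinear:
  fixes S :: "'a::euclidean_space set"
  assumes "collinear S"
  shows "card {x. x extreme_point_of S} \<le> 2"
proof (rule ccontr)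
  assume "\<not> ?thesis"
  then obtain T where "T \<subseteq> {x. x extreme_point_of S}" "card T = 3"
    by (metis not_less_eq_eq numeral_3_eq_3 numeral_2_eq_2 obtain_subset_with_card_n)
  then obtain x y z where xyz: "x \<noteq> y" "y \<noteq> z" "x \<noteq> z"
      and extreme: "x extreme_point_of S" "y extreme_point_of S" "z extreme_point_of S"
    by (auto simp: card_3_iff)
  then have "collinear {x, y, z}"
    using assms by (auto simp: extreme_point_of_def intro: collinear_subset)
  then have "x \<in> open_segment y z \<or> y \<in> open_segment z x \<or> z \<in> open_segment x y"
    using xyz by (auto simp: collinear_between_cases between_mem_segment open_segment_def)
  then show False
    using extreme unfolding extreme_point_of_def by blast
qed

lemma extreme_point_of_Int_mem:
  "x extreme_point_of S \<Longrightarrow> x \<in> T \<Longrightarrow> x extreme_point_of (S \<inter> T)"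
  by (auto simp: extreme_point_of_def)

lemma supporting_hyperplane_frontier:
  fixes C :: "'a::euclidean_space set"
  assumes "convex C" "p \<in> frontier C"
  obtains a where "a \<noteq> 0" "\<And>y. y \<in> C \<Longrightarrow> a \<bullet> p \<le> a \<bullet> y"
proof (cases "interior C = {}")
  case True
  then obtain a b where "a \<noteq> 0" "C \<subseteq> {x. a \<bullet> x = b}"
    using empty_interior_subset_hyperplane assms(1) by metis
  moreover from this have "closure C \<subseteq> {x. a \<bullet> x = b}"
    by (simp add: closed_hyperplane closure_minimal)
  ultimately show ?thesis
    using that assms(2) by (fastforce simp: frontier_def)
next
  case False
  then have "rel_interior C = interior C"
    by (rule rel_interior_nonempty_interior)
  then have "p \<in> closure C" "p \<notin> rel_interior C"
    using assms(2) by (simp_all add: frontier_def)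
  then obtain a where "a \<noteq> 0" "\<And>y. y \<in> closure C \<Longrightarrow> a \<bullet> p \<le> a \<bullet> y"
    using supporting_hyperplane_relative_frontier[OF assms(1)] by metis
  then show ?thesis
    using that closure_subset by (meson subsetD)
qed

lemma independent_image_if_biorthogonal:
  fixes v w :: "'i \<Rightarrow> 'a::real_inner"
  assumes "\<And>i j. i \<in> I \<Longrightarrow> j \<in> I \<Longrightarrow> i \<noteq> j \<Longrightarrow> w i \<bullet> v j = 0"
    and "\<And>i. i \<in> I \<Longrightarrow> w i \<bullet> v i \<noteq> 0"
  shows "inj_on v I" "independent (v ` I)"
proof -
  show "inj_on v I"
    using assms by (metis inj_onI)
  show "independent (v ` I)"
  proof
    assume "dependent (v ` I)"
    then obtain j where j: "j \<in> I" "v j \<in> span (v ` I - {v j})"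
      unfolding dependent_def by blast
    have "v ` I - {v j} \<subseteq> {x. w j \<bullet> x = 0}"
      using assms(1) j(1) by fastforce
    then have "span (v ` I - {v j}) \<subseteq> {x. w j \<bullet> x = 0}"
      by (simp add: span_minimal subspace_hyperplane)
    then show False
      using j assms(2) by blast
  qed
qed

lemma frontier_vertex_extreme_on_some_line:
  fixes C :: "'a::euclidean_space set"
  assumes "convex C" "p \<in> C" "p \<in> frontier C"
    and hyperplanes: "\<forall>h\<in>S. affine_hyperplane h" and "card S = DIM('a)" and vertex: "\<Inter>S = {p}"
  shows "\<exists>h\<in>S. p extreme_point_of (\<Inter>(S - {h}) \<inter> C)"
proof (rule ccontr)
  assume no_extreme: "\<not> ?thesis"
  have "\<exists>q \<in> \<Inter>(S - {h}) \<inter> C. \<exists>r \<in> C. p \<in> open_segment q r" if "h \<in> S" for h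
  proof -
    have "p \<in> \<Inter>(S - {h}) \<inter> C"
      using vertex assms(2) by auto
    moreover have "\<not> p extreme_point_of (\<Inter>(S - {h}) \<inter> C)"
      using no_extreme that by blast
    ultimately show ?thesis
      unfolding extreme_point_of_def by blast
  qed
  then obtain Q where Q: "\<And>h. h \<in> S \<Longrightarrow> Q h \<in> \<Inter>(S - {h}) \<inter> C \<and> (\<exists>r \<in> C. p \<in> open_segment (Q h) r)"
    by metis
  obtain a where "a \<noteq> 0" and a: "\<And>y. y \<in> C \<Longrightarrow> a \<bullet> p \<le> a \<bullet> y"
    using supporting_hyperplane_frontier assms(1,3) by blast
  obtain A B where AB: "\<And>h x. h \<in> S \<Longrightarrow> x \<in> h \<longleftrightarrow> A h \<bullet> x = B h"
    using affine_hyperplane_equations hyperplanes by blast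
  define V where "V h = Q h - p" for h
  have "C \<inter> {y. a \<bullet> y = a \<bullet> p} face_of C"
    using a by (intro face_of_Int_supporting_hyperplane_ge assms(1)) auto
  then have V_tangent: "V ` S \<subseteq> {x. a \<bullet> x = 0}"
    using Q assms(2) face_ofD unfolding V_def by (fastforce simp: inner_diff_right)
  have "A g \<bullet> V h = 0" if "g \<in> S" "h \<in> S" "g \<noteq> h" for g h
  proof -
    have "Q h \<in> g" "p \<in> g"
      using Q[OF \<open>h \<in> S\<close>] vertex that by auto
    then show ?thesis
      using AB[OF \<open>g \<in> S\<close>] by (simp add: V_def inner_diff_right)
  qed
  moreover have "A h \<bullet> V h \<noteq> 0" if "h \<in> S" for h
  proof -
    have "Q h \<noteq> p"
      using Q[OF that] by (auto simp: open_segment_def)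
    then have "Q h \<notin> h"
      using Q[OF that] vertex by blast
    moreover have "p \<in> h"
      using vertex that by auto
    ultimately show ?thesis
      using AB[OF that] by (simp add: V_def inner_diff_right)
  qed
  ultimately have "inj_on V S" "independent (V ` S)"
    using independent_image_if_biorthogonal[of S A V] by blast+
  then have "DIM('a) \<le> dim {x. a \<bullet> x = 0}"
    using independent_card_le_dim[OF V_tangent] card_image \<open>card S = DIM('a)\<close> by metis
  then show False
    using dim_hyperplane[OF \<open>a \<noteq> 0\<close>] DIM_positive[where 'a='a] by linarith
qed

lemma collinear_Inter_of_DIM_minus_1_hyperplanes:
  fixes H :: "'a::euclidean_space set set"
  assumes "finite H" "DIM('a) \<le> card H" and hyperplanes: "\<forall>h\<in>H. affine_hyperplane h"
    and vertices: "\<forall>S. S \<subseteq> H \<and> card S = DIM('a) \<longrightarrow> (\<exists>p. \<Inter>S = {p})"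
    and "T \<subseteq> H" "card T = DIM('a) - 1"
  shows "collinear (\<Inter>T)"
proof -
  have "finite T"
    using \<open>T \<subseteq> H\<close> \<open>finite H\<close> finite_subset by blast
  have "card T < card H"
    using assms(2,6) DIM_positive[where 'a='a] by linarith
  then obtain h where "h \<in> H" "h \<notin> T"
    by (meson \<open>finite T\<close> card_mono leD subsetI)
  then have "card (insert h T) = DIM('a)"
    using \<open>finite T\<close> assms(6) DIM_positive[where 'a='a] by simp
  then obtain s where "\<Inter>(insert h T) = {s}"
    using vertices[rule_format, of "insert h T"] \<open>h \<in> H\<close> \<open>T \<subseteq> H\<close> by auto
  then have "\<Inter>T \<inter> h = {s}"
    by (simp add: inf_commute)
  moreover have "affine (\<Inter>T)"
    using hyperplanes \<open>T \<subseteq> H\<close>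
    by (intro affine_Inter) (metis affine_hyperplane affine_hyperplane_def subsetD)
  ultimately show ?thesis
    using collinear_if_affine_Int_hyperplane_singleton hyperplanes \<open>h \<in> H\<close> by blast
qed

lemma finite_arrangement_vertices:
  fixes H :: "'a::euclidean_space set set"
  assumes "finite H" and vertices: "\<forall>S. S \<subseteq> H \<and> card S = DIM('a) \<longrightarrow> (\<exists>p. \<Inter>S = {p})"
  shows "finite (arrangement_vertices H)"
proof -
  have "finite {S. S \<subseteq> H \<and> card S = DIM('a)}"
    using \<open>finite H\<close> by simp
  moreover have "finite (\<Inter>S)" if "S \<subseteq> H" "card S = DIM('a)" for S
    using vertices[rule_format, OF conjI[OF that]] by auto
  ultimately show ?thesis
    unfolding arrangement_vertices_def Setcompr_eq_image
    by (intro finite_Union finite_imageI) auto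
qed

lemma frontier_Int_arrangement_vertices_subset:
  fixes H :: "'a::euclidean_space set set" and C :: "'a set"
  assumes hyperplanes: "\<forall>h\<in>H. affine_hyperplane h"
    and vertices: "\<forall>S. S \<subseteq> H \<and> card S = DIM('a) \<longrightarrow> (\<exists>p. \<Inter>S = {p})"
    and "convex C" "closed C"
  shows "frontier C \<inter> arrangement_vertices H \<subseteq>
    (\<Union>T\<in>{T. T \<subseteq> H \<and> card T = DIM('a) - 1}.
      {x. x extreme_point_of (\<Inter>T \<inter> C \<inter> arrangement_vertices H)})"
proof
  fix p assume p: "p \<in> frontier C \<inter> arrangement_vertices H"
  then obtain S where S: "S \<subseteq> H" "card S = DIM('a)" and "p \<in> \<Inter>S"
    unfolding arrangement_vertices_def by blast
  moreover obtain q where "\<Inter>S = {q}"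
    using vertices[rule_format, OF conjI[OF S]] by blast
  ultimately have "\<Inter>S = {p}"
    by simp
  moreover have "p \<in> C"
    using p \<open>closed C\<close> frontier_subset_closed by blast
  moreover have "\<forall>h\<in>S. affine_hyperplane h"
    using hyperplanes S(1) by blast
  ultimately obtain h where "h \<in> S" "p extreme_point_of (\<Inter>(S - {h}) \<inter> C)"
    using frontier_vertex_extreme_on_some_line[OF \<open>convex C\<close> _ _ _ S(2)] p by blast
  moreover have "S - {h} \<subseteq> H" "card (S - {h}) = DIM('a) - 1"
    using S \<open>h \<in> S\<close> by auto
  ultimately show "p \<in> (\<Union>T\<in>{T. T \<subseteq> H \<and> card T = DIM('a) - 1}.
      {x. x extreme_point_of (\<Inter>T \<inter> C \<inter> arrangement_vertices H)})"
    using extreme_point_of_Int_mem[of p _ "arrangement_vertices H"] p by blast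
qed

lemma card_frontier_Int_arrangement_vertices:
  fixes H :: "'a::euclidean_space set set" and C :: "'a set"
  assumes "finite H" "DIM('a) \<le> card H" and hyperplanes: "\<forall>h\<in>H. affine_hyperplane h"
    and vertices: "\<forall>S. S \<subseteq> H \<and> card S = DIM('a) \<longrightarrow> (\<exists>p. \<Inter>S = {p})"
    and "convex C" "closed C"
  shows "card (frontier C \<inter> arrangement_vertices H) \<le> 2 * (card H choose (DIM('a) - 1))"
proof -
  define P where "P = arrangement_vertices H"
  define lines where "lines = {T. T \<subseteq> H \<and> card T = DIM('a) - 1}"
  define E where "E T = {x. x extreme_point_of (\<Inter>T \<inter> C \<inter> P)}" for T
  have cover: "frontier C \<inter> P \<subseteq> (\<Union>T\<in>lines. E T)"
    using frontier_Int_arrangement_vertices_subset[OF hyperplanes vertices assms(5,6)]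
    unfolding P_def lines_def E_def .
  have "(\<Union>T\<in>lines. E T) \<subseteq> P"
    unfolding E_def extreme_point_of_def by blast
  have "finite P"
    unfolding P_def using finite_arrangement_vertices[OF assms(1) vertices] .
  have at_most_two: "card (E T) \<le> 2" if "T \<in> lines" for T
  proof -
    have "collinear (\<Inter>T)"
      using collinear_Inter_of_DIM_minus_1_hyperplanes[OF assms(1-4)] that
      unfolding lines_def by blast
    then have "collinear (\<Inter>T \<inter> C \<inter> P)"
      by (rule collinear_subset) blast
    then show ?thesis
      unfolding E_def by (rule card_extreme_points_collinear)
  qed
  have "card (frontier C \<inter> P) \<le> card (\<Union>T\<in>lines. E T)"
    using cover \<open>(\<Union>T\<in>lines. E T) \<subseteq> P\<close> \<open>finite P\<close>
    by (intro card_mono) (auto intro: finite_subset)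
  also have "\<dots> \<le> (\<Sum>T\<in>lines. card (E T))"
    using \<open>finite H\<close> unfolding lines_def by (intro card_UN_le) simp
  also have "\<dots> \<le> 2 * card lines"
    using sum_bounded_above[of lines "\<lambda>T. card (E T)" 2] at_most_two by (simp add: mult.commute)
  also have "card lines = card H choose (DIM('a) - 1)"
    using n_subsets[OF \<open>finite H\<close>] unfolding lines_def by simp
  finally show ?thesis
    unfolding P_def .
qed

theorem lemma8:
  fixes P C :: "'a::euclidean_space set" and n :: nat
  assumes "DIM('a) \<le> n"
    and "grid_set n P"
    and "compact C" and "convex C"
  shows "card (frontier C \<inter> P) \<le> 2 * (n choose (DIM('a) - 1))"
proof -
  obtain H where H: "finite H" "card H = n" "\<forall>h\<in>H. affine_hyperplane h"
      "\<forall>S. S \<subseteq> H \<and> card S = DIM('a) \<longrightarrow> (\<exists>p. \<Inter>S = {p})"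
      and "P = arrangement_vertices H"
    using assms(2) unfolding grid_set_def arrangement_vertices_def by blast
  have "closed C"
    using assms(3) by (rule compact_imp_closed)
  with H assms(1,4) show ?thesis
    using card_frontier_Int_arrangement_vertices[of H C] \<open>P = arrangement_vertices H\<close> by simp
qed

end
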